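(* Let $q$ be a prime power and $n$ a positive integer with $\gcd(q,n)=1$. Iso-self-dual cyclic codes over $\mathbb{F}_q$ of length $n$ exist if and only if $0<\nu_2(n)<2\,\nu_2(q-1)$.
   Context: $R_n=\mathbb{F}_q[X]/\langle X^n-1\rangle$; each element is identified with its unique representative $a_0+a_1X+\dots+a_{n-1}X^{n-1}$ and with the word $(a_0,\dots,a_{n-1})\in\mathbb{F}_q^n$. A cyclic code of length $n$ is an ideal of $R_n$; $C^\perp$ is the Euclidean dual of $C$ in $\mathbb{F}_q^n$. Fix a primitive $n$-th root of unity $\theta$ in an extension field of $\mathbb{F}_q$. For $s\in\mathbb{Z}_n^*$ (unit group of $\mathbb{Z}/n\mathbb{Z}$) and $t\in\mathbb{Z}_n$ with $qt\equiv t\pmod n$ (so $\theta^t\in\mathbb{F}_q$), let $\varphi_{s,t}:R_n\to R_n$, $a(X)\mapsto a(\theta^{-t}X^{s^{-1}})\bmod (X^n-1)$, where $s^{-1}$ is a positive integer with $ss^{-1}\equiv1\pmod n$. A cyclic code $C\subseteq R_n$ is iso-self-dual if there exist such $s,t$ with $\varphi_{s,t}(C)=C^\perp$. For a nonzero integer $m$, $\nu_2(m)$ is the exponent of the largest power of $2$ dividing $m$; $\nu_2(0)=\infty$. *)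

theory Defs
  imports "HOL-Computational_Algebra.Computational_Algebra" "HOL-Number_Theory.Cong"
begin

definition xn1 :: "nat \<Rightarrow> 'a::field poly" where
  "xn1 n = monom 1 n - 1"

text \<open>Elements of R_n, identified with their unique representatives of degree < n.\<close>
definition Rn :: "nat \<Rightarrow> 'a::field poly set" where
  "Rn n = {p. p = 0 \<or> degree p < n}"

text \<open>A cyclic code of length n: an ideal of R_n (as a set of representatives).\<close>
definition cyclic_code :: "nat \<Rightarrow> 'a::field poly set \<Rightarrow> bool" where
  "cyclic_code n C \<longleftrightarrow> C \<subseteq> Rn n \<and> 0 \<in> C \<and>
     (\<forall>a\<in>C. \<forall>b\<in>C. a + b \<in> C) \<and>
     (\<forall>a\<in>C. \<forall>r. (r * a) mod xn1 n \<in> C)"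

text \<open>Euclidean dual in F_q^n, a word (a_0,...,a_{n-1}) being the coefficient vector.\<close>
definition dual_code :: "nat \<Rightarrow> 'a::field poly set \<Rightarrow> 'a poly set" where
  "dual_code n C = {b \<in> Rn n. \<forall>a\<in>C. (\<Sum>i<n. coeff a i * coeff b i) = 0}"

text \<open>phi_{s,t}(a) = a(theta^{-t} X^{s'}) mod (X^n - 1), where s' is a positive inverse of s
  mod n and theta^{-t} is the element of F_q whose image under the field embedding emb
  is inverse (theta^t).\<close>
definition phi :: "('a::field \<Rightarrow> 'b::field) \<Rightarrow> 'b \<Rightarrow> nat \<Rightarrow> nat \<Rightarrow> nat \<Rightarrow> 'a poly \<Rightarrow> 'a poly" where
  "phi emb \<theta> n s' t a =
     pcompose a (monom (THE c. emb c = inverse (\<theta> ^ t)) s') mod xn1 n"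

definition iso_self_dual ::
  "('a::{finite,field} \<Rightarrow> 'b::field) \<Rightarrow> 'b \<Rightarrow> nat \<Rightarrow> 'a poly set \<Rightarrow> bool" where
  "iso_self_dual emb \<theta> n C \<longleftrightarrow>
     (\<exists>s s' t. s < n \<and> coprime s n \<and> s' > 0 \<and> [s * s' = 1] (mod n) \<and>
        t < n \<and> [card (UNIV :: 'a set) * t = t] (mod n) \<and>
        phi emb \<theta> n s' t ` C = dual_code n C)"

definition prim_root :: "nat \<Rightarrow> 'b::field \<Rightarrow> bool" where
  "prim_root n \<theta> \<longleftrightarrow> \<theta> ^ n = 1 \<and> (\<forall>k. 0 < k \<and> k < n \<longrightarrow> \<theta> ^ k \<noteq> 1)"

definition field_embedding :: "('a::field \<Rightarrow> 'b::field) \<Rightarrow> bool" where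
  "field_embedding emb \<longleftrightarrow> inj emb \<and> emb 0 = 0 \<and> emb 1 = 1 \<and>
     (\<forall>x y. emb (x + y) = emb x + emb y) \<and> (\<forall>x y. emb (x * y) = emb x * emb y)"

end

theory Submission
  imports Defs "HOL-Library.Cardinality"
begin

text \<open>Evaluate codewords at the powers \<open>\<theta> ^ j\<close>. Since \<open>n\<close> is prime to \<open>q\<close>, this discrete
  Fourier transform is invertible, so a cyclic code is described by its zero set \<open>Z\<close>, a union
  of \<open>q\<close>-cyclotomic cosets modulo \<open>n\<close>. The dual code has zero set \<open>{j. -j \<notin> Z}\<close>, and
  \<open>\<phi>\<^sub>s\<^sub>,\<^sub>t\<close> pulls zero sets back along \<open>j \<mapsto> s\<^sup>-\<^sup>1 j - t\<close>. Hence an iso-self-dual code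
  exists iff some such \<open>Z\<close> satisfies \<open>u j - t \<in> Z \<longleftrightarrow> -j \<notin> Z\<close> for a unit \<open>u\<close> and a
  \<open>t\<close> with \<open>q t \<equiv> t\<close>. If \<open>\<nu>\<^sub>2(n) = 0\<close> or \<open>\<nu>\<^sub>2(n) \<ge> 2 \<nu>\<^sub>2(q - 1)\<close>, a 2-adic linear
  congruence yields a residue class modulo \<open>2 ^ \<nu>\<^sub>2(n)\<close> that \<open>Z\<close> would have to split into two
  halves of equal size, although the class has the odd size \<open>n / 2 ^ \<nu>\<^sub>2(n)\<close>. Otherwise an
  explicit \<open>Z\<close> works with \<open>u = -1\<close>.\<close>

section \<open>Finite fields\<close>

lemma finite_field_power_card:
  fixes x :: "'a::{finite,field}"
  shows "x ^ CARD('a) = x"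
proof (cases "x = 0")
  case False
  let ?U = "UNIV - {0::'a}"
  have "x ^ (CARD('a) - 1) * \<Prod>?U = (\<Prod>y\<in>?U. x * y)"
    by (simp add: prod.distrib)
  also have "\<dots> = \<Prod>?U"
    by (rule prod.reindex_bij_witness[of _ "\<lambda>y. y / x" "\<lambda>y. x * y"]) (use False in auto)
  finally have "x ^ (CARD('a) - 1) = 1"
    by simp
  then show ?thesis
    using finite_UNIV_card_ge_0[where 'a = 'a] by (simp add: power_eq_if)
qed (simp add: finite_UNIV_card_ge_0)

lemma card_finite_field_ge_2: "CARD('a::{finite,field}) \<ge> 2"
proof -
  have "card {0, 1::'a} \<le> CARD('a)"
    by (rule card_mono) auto
  then show ?thesis
    by simp
qed

definition add_closed :: "'a::field set \<Rightarrow> bool" where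
  "add_closed S \<longleftrightarrow> 0 \<in> S \<and> (\<forall>x\<in>S. \<forall>y\<in>S. x + y \<in> S)"

lemma add_closed_of_nat_mult: "add_closed S \<Longrightarrow> x \<in> S \<Longrightarrow> of_nat i * x \<in> S"
  by (induction i) (auto simp: add_closed_def algebra_simps)

lemma add_closed_diff:
  fixes S :: "'a::{finite,field} set"
  assumes "add_closed S" "x \<in> S" "y \<in> S"
  shows "x - y \<in> S"
proof -
  have "y + of_nat (CHAR('a) - 1) * y = of_nat CHAR('a) * y"
    by (simp add: of_nat_diff finite_imp_CHAR_pos Suc_leI algebra_simps)
  then have "- y = of_nat (CHAR('a) - 1) * y"
    by (intro add.inverse_unique) simp
  then show ?thesis
    using add_closed_of_nat_mult[OF assms(1,3)] assms unfolding add_closed_def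
    by (metis diff_conv_add_uminus)
qed

lemma inj_on_add_closed_span:
  fixes S :: "'a::{finite,field} set"
  assumes S: "add_closed S" and y: "y \<notin> S"
  shows "inj_on (\<lambda>(s, i). s + of_nat i * y) (S \<times> {..<CHAR('a)})"
proof -
  let ?p = "CHAR('a)"
  have p: "prime ?p"
    by (rule prime_CHAR_semidom) (simp add: finite_imp_CHAR_pos)
  have index_eq: "i = i'" if "s \<in> S" "s' \<in> S" "i < ?p" "i' \<le> i"
    and eq: "s + of_nat i * y = s' + of_nat i' * y" for s s' i i'
  proof (rule ccontr)
    assume "i \<noteq> i'"
    then have "\<not> ?p dvd (i - i')"
      using that by (auto dest: dvd_imp_le)
    then have "coprime (i - i') ?p"
      using p by (simp add: prime_imp_coprime coprime_commute)
    then obtain e where e: "[(i - i') * e = 1] (mod ?p)"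
      using cong_solve_coprime_nat by auto
    have "of_nat (i - i') * y = s' - s"
      using eq \<open>i' \<le> i\<close> by (simp add: of_nat_diff algebra_simps)
    then have "of_nat (i - i') * y \<in> S"
      using add_closed_diff[OF S] that by simp
    then have "of_nat e * (of_nat (i - i') * y) \<in> S"
      by (rule add_closed_of_nat_mult[OF S])
    moreover have "(of_nat ((i - i') * e) :: 'a) = of_nat 1"
      using e by (simp only: of_nat_eq_iff_cong_CHAR)
    ultimately show False
      using y by (simp add: mult.assoc[symmetric] mult.commute[of "of_nat e"])
  qed
  show ?thesis
  proof (rule inj_onI, clarify)
    fix s i s' i' assume "s \<in> S" "i < ?p" "s' \<in> S" "i' < ?p" "s + of_nat i * y = s' + of_nat i' * y"
    moreover from this have "i = i'"
      using index_eq[of s s' i i'] index_eq[of s' s i' i] by (cases "i' \<le> i") auto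
    ultimately show "s = s' \<and> i = i'"
      by simp
  qed
qed

lemma add_closed_extend:
  fixes S :: "'a::{finite,field} set"
  assumes S: "add_closed S" and y: "y \<notin> S"
  defines "S' \<equiv> (\<lambda>(s, i). s + of_nat i * y) ` (S \<times> {..<CHAR('a)})"
  shows "add_closed S'" "S \<subseteq> S'" "y \<in> S'" "card S' = card S * CHAR('a)"
proof -
  let ?p = "CHAR('a)"
  have p1: "?p > 1"
    by (rule prime_gt_1_nat, rule prime_CHAR_semidom) (simp add: finite_imp_CHAR_pos)
  have of_nat_mod: "(of_nat i :: 'a) = of_nat (i mod ?p)" for i
    by (simp only: of_nat_eq_iff_cong_CHAR) (simp add: cong_def)
  have mem: "s + of_nat i * y \<in> S'" if "s \<in> S" "i < ?p" for s i
    unfolding S'_def using that by (intro image_eqI[where x = "(s, i)"]) simp_all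
  have zero: "0 \<in> S"
    using S by (simp add: add_closed_def)
  show "S \<subseteq> S'"
    using mem[of _ 0] p1 by auto
  show "y \<in> S'"
    using mem[OF zero, of 1] p1 by simp
  have "x1 + x2 \<in> S'" if "x1 \<in> S'" "x2 \<in> S'" for x1 x2
  proof -
    from that obtain s1 i1 s2 i2 where "s1 \<in> S" "s2 \<in> S"
      and x: "x1 = s1 + of_nat i1 * y" "x2 = s2 + of_nat i2 * y"
      unfolding S'_def by auto
    then have "s1 + s2 \<in> S"
      using S by (simp add: add_closed_def)
    moreover have "x1 + x2 = (s1 + s2) + of_nat ((i1 + i2) mod ?p) * y"
      unfolding x by (simp add: algebra_simps flip: of_nat_mod)
    ultimately show ?thesis
      using mem p1 by simp
  qed
  moreover have "0 \<in> S'"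
    using mem[OF zero, of 0] p1 by simp
  ultimately show "add_closed S'"
    by (simp add: add_closed_def)
  show "card S' = card S * ?p"
    unfolding S'_def using inj_on_add_closed_span[OF S y]
    by (simp add: card_image card_cartesian_product)
qed

lemma card_finite_field_power_CHAR: "\<exists>k. CARD('a::{finite,field}) = CHAR('a) ^ k"
proof -
  have "\<exists>k. CARD('a) = CHAR('a) ^ k"
    if "add_closed S" "card S = CHAR('a) ^ k" for S :: "'a set" and k
    using that
  proof (induction "card (UNIV - S)" arbitrary: S k rule: less_induct)
    case (less S k)
    show ?case
    proof (cases "S = UNIV")
      case True
      then show ?thesis
        using less.prems(2) by auto
    next
      case False
      then obtain y where y: "y \<notin> S"
        by auto
      define S' where "S' = (\<lambda>(s, i). s + of_nat i * y) ` (S \<times> {..<CHAR('a)})"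
      have S': "add_closed S'" "S \<subseteq> S'" "y \<in> S'" "card S' = CHAR('a) ^ Suc k"
        using add_closed_extend[OF less.prems(1) y] less.prems(2) unfolding S'_def
        by (simp_all add: mult.commute)
      have "UNIV - S' \<subset> UNIV - S"
        using S'(2,3) y by blast
      then have "card (UNIV - S') < card (UNIV - S)"
        by (simp add: psubset_card_mono)
      then show ?thesis
        using less.hyps S'(1,4) by blast
    qed
  qed
  from this[of "{0}" 0] show ?thesis
    by (simp add: add_closed_def)
qed

section \<open>Unions of cyclotomic cosets\<close>

text \<open>\<open>Z\<close> is a union of \<open>q\<close>-cyclotomic cosets modulo \<open>n\<close>, represented by the set of all
  integers in these residue classes.\<close>
definition cyclotomic_closed :: "nat \<Rightarrow> nat \<Rightarrow> int set \<Rightarrow> bool" where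
  "cyclotomic_closed q n Z \<longleftrightarrow>
     (\<forall>j j'. [j = j'] (mod int n) \<longrightarrow> j \<in> Z \<longleftrightarrow> j' \<in> Z) \<and> (\<forall>j. int q * j \<in> Z \<longleftrightarrow> j \<in> Z)"

lemma cyclotomic_closed_cong:
  "cyclotomic_closed q n Z \<Longrightarrow> [j = j'] (mod int n) \<Longrightarrow> j \<in> Z \<longleftrightarrow> j' \<in> Z"
  unfolding cyclotomic_closed_def by blast

lemma cyclotomic_closed_mult:
  "cyclotomic_closed q n Z \<Longrightarrow> int q * j \<in> Z \<longleftrightarrow> j \<in> Z"
  unfolding cyclotomic_closed_def by blast

lemma cyclotomic_closed_power_mult:
  "cyclotomic_closed q n Z \<Longrightarrow> int q ^ l * j \<in> Z \<longleftrightarrow> j \<in> Z"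
  by (induction l) (simp_all add: cyclotomic_closed_mult mult.assoc)

lemma inj_on_affine_mod:
  fixes a c n :: int
  assumes "coprime a n"
  shows "inj_on (\<lambda>k. (a * k + c) mod n) {0..<n}"
proof (rule inj_onI)
  fix k k' assume "k \<in> {0..<n}" "k' \<in> {0..<n}" "(a * k + c) mod n = (a * k' + c) mod n"
  then show "k = k'"
    using assms by (auto simp flip: cong_def simp: cong_add_rcancel cong_mult_lcancel
        intro: cong_less_imp_eq_int)
qed

lemma mult_mod_image_eq:
  fixes a n :: int
  assumes "coprime a n" "S \<subseteq> {0..<n}" "\<And>k. k \<in> S \<Longrightarrow> (a * k) mod n \<in> S"
  shows "(\<lambda>k. (a * k) mod n) ` S = S"
proof (rule endo_inj_surj)
  show "finite S"
    using assms(2) finite_subset by blast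
  show "inj_on (\<lambda>k. (a * k) mod n) S"
    using inj_on_subset[OF inj_on_affine_mod[OF assms(1), of 0] assms(2)] by simp
qed (use assms(3) in auto)

text \<open>Closure under multiplication by \<open>q\<close> alone suffices: multiplication by \<open>q\<close> permutes
  the residues modulo \<open>n\<close> lying in \<open>Z\<close>.\<close>
lemma cyclotomic_closedI:
  assumes "n > 0" "coprime q n"
    and cong: "\<And>j j'. [j = j'] (mod int n) \<Longrightarrow> j \<in> Z \<longleftrightarrow> j' \<in> Z"
    and mult: "\<And>j. j \<in> Z \<Longrightarrow> int q * j \<in> Z"
  shows "cyclotomic_closed q n Z"
proof -
  let ?S = "Z \<inter> {0..<int n}"
  have mod_in: "j mod int n \<in> Z \<longleftrightarrow> j \<in> Z" for j
    by (rule cong) (simp add: cong_def)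
  have cop: "coprime (int q) (int n)"
    using assms(2) by simp
  have "(int q * k) mod int n \<in> ?S" if "k \<in> ?S" for k
    using that assms(1) mult mod_in[of "int q * k"] by simp
  then have image: "(\<lambda>k. (int q * k) mod int n) ` ?S = ?S"
    by (intro mult_mod_image_eq[OF cop]) auto
  have cancel: "j \<in> Z" if "int q * j \<in> Z" for j
  proof -
    let ?j = "j mod int n"
    have j: "?j \<in> {0..<int n}"
      using assms(1) by simp
    have "(int q * ?j) mod int n \<in> ?S"
      using that assms(1) mod_in[of "int q * j"] by (simp add: mod_mult_right_eq)
    then have "(int q * ?j) mod int n \<in> (\<lambda>k. (int q * k) mod int n) ` ?S"
      by (simp only: image)
    then obtain k where k: "k \<in> ?S" "(int q * ?j) mod int n = (int q * k) mod int n"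
      by (elim imageE)
    then have "?j = k"
      using inj_onD[OF inj_on_affine_mod[OF cop, of 0], of ?j k] j by simp
    then show ?thesis
      using k(1) mod_in[of j] by simp
  qed
  show ?thesis
    unfolding cyclotomic_closed_def
  proof (intro conjI allI impI)
    show "j \<in> Z \<longleftrightarrow> j' \<in> Z" if "[j = j'] (mod int n)" for j j'
      using cong[OF that] .
    show "int q * j \<in> Z \<longleftrightarrow> j \<in> Z" for j
      using mult cancel by blast
  qed
qed

lemma even_card_if_swapping_injection:
  assumes "finite W'" "card W' = card W"
    and f: "inj_on f W" "f ` W \<subseteq> W'" "\<And>x. x \<in> W \<Longrightarrow> f x \<in> Z \<longleftrightarrow> x \<notin> Z"
    and g: "inj_on g W" "g ` W \<subseteq> W'" "\<And>x. x \<in> W \<Longrightarrow> g x \<in> Z \<longleftrightarrow> x \<in> Z"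
  shows "even (card W)"
proof -
  have "finite W"
    using assms(1) f(1,2) by (meson finite_imageD finite_subset)
  have "card (W \<inter> Z) \<le> card (W' - Z)" "card (W - Z) \<le> card (W' \<inter> Z)"
    "card (W \<inter> Z) \<le> card (W' \<inter> Z)" "card (W - Z) \<le> card (W' - Z)"
    by (intro card_inj_on_le[OF inj_on_subset[OF f(1)]] card_inj_on_le[OF inj_on_subset[OF g(1)]];
        use assms in auto)+
  moreover have "card W = card (W \<inter> Z) + card (W - Z)" "card W' = card (W' \<inter> Z) + card (W' - Z)"
    using \<open>finite W\<close> assms(1) by (simp_all add: card_Int_Diff)
  ultimately have "card W = 2 * card (W \<inter> Z)"
    using assms(2) by linarith
  then show ?thesis
    by simp
qed

lemma residue_class_eq_image:
  fixes P m :: nat and c :: int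
  assumes "P > 0"
  shows "{k \<in> {0..<int (P * m)}. [k = c] (mod int P)} = (\<lambda>l. c mod int P + int P * l) ` {0..<int m}"
    (is "_ = ?f ` _")
proof (intro equalityI subsetI)
  fix k assume "k \<in> {k \<in> {0..<int (P * m)}. [k = c] (mod int P)}"
  then have k: "0 \<le> k" "k < int P * int m" "k mod P = c mod P"
    by (auto simp: cong_def)
  have "k = ?f (k div P)"
    using mod_mult_div_eq[of k "int P"] by (simp add: k(3))
  moreover have "0 \<le> k div P"
    using k(1) assms by (simp add: pos_imp_zdiv_nonneg_iff)
  moreover have "k div P < m"
  proof (rule ccontr)
    assume "\<not> k div P < m"
    then have "int P * int m \<le> int P * (k div P)"
      by (simp add: mult_left_mono)
    also have "\<dots> \<le> k"
      using \<open>k = ?f (k div P)\<close> assms by (smt (verit) pos_mod_sign of_nat_0_less_iff)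
    finally show False
      using k(2) by simp
  qed
  ultimately show "k \<in> ?f ` {0..<int m}"
    by (intro image_eqI) auto
next
  fix k assume "k \<in> ?f ` {0..<int m}"
  then obtain l :: int where l: "0 \<le> l" "l < int m" "k = ?f l"
    by auto
  have "c mod P < P"
    using assms by simp
  then have "k < P * (l + 1)"
    using l(3) by (simp add: distrib_left)
  also have "\<dots> \<le> P * m"
    using l(2) by (simp add: mult_left_mono)
  finally show "k \<in> {k \<in> {0..<int (P * m)}. [k = c] (mod int P)}"
    using l assms by (simp add: cong_def)
qed

lemma card_residue_class:
  fixes P m :: nat and c :: int
  assumes "P > 0"
  shows "card {k \<in> {0..<int (P * m)}. [k = c] (mod int P)} = m"
proof -
  have "inj_on (\<lambda>l. c mod int P + int P * l) {0..<int m}"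
    using assms by (intro inj_onI) simp
  then show ?thesis
    by (subst residue_class_eq_image[OF assms]) (simp add: card_image)
qed

lemma cyclotomic_closed_coset:
  assumes "cyclotomic_closed q n Z" "[j = int q ^ l * x] (mod int n)"
  shows "j \<in> Z \<longleftrightarrow> x \<in> Z"
  using cyclotomic_closed_cong[OF assms] cyclotomic_closed_power_mult[OF assms(1)] by simp

lemma two_power_factor_le:
  fixes q u w :: int
  assumes q: "q - 1 = 2 ^ b * w" "odd w"
  obtains i c v where "i \<le> 1" "q ^ i + u = 2 ^ c * v" "odd v" "c \<le> b"
proof (cases "2 ^ Suc b dvd 1 + u")
  case True
  then obtain k where "1 + u = 2 ^ Suc b * k"
    by (elim dvdE)
  then have "q ^ 1 + u = 2 ^ b * (w + 2 * k)"
    using q(1) by (simp add: algebra_simps)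
  then show ?thesis
    using that[of 1 b "w + 2 * k"] q(2) by simp
next
  case False
  then have "1 + u \<noteq> 0"
    by auto
  then obtain v where v: "1 + u = 2 ^ multiplicity 2 (1 + u) * v" "\<not> 2 dvd v"
    using multiplicity_decompose'[of "1 + u" 2] by auto
  have "multiplicity 2 (1 + u) \<le> b"
  proof (rule ccontr)
    assume "\<not> ?thesis"
    then have "2 ^ Suc b dvd (2::int) ^ multiplicity 2 (1 + u)"
      by (intro le_imp_power_dvd) simp
    then show False
      using False v(1) dvd_mult2 by metis
  qed
  then show ?thesis
    using that[of 0 "multiplicity 2 (1 + u)" v] v by simp
qed

lemma two_adic_linear_congruence:
  fixes q u t w :: int
  assumes q: "q - 1 = 2 ^ b * w" "odd w" and ab: "a = 0 \<or> 2 * b \<le> a"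
    and t: "2 ^ a dvd (q - 1) * t"
  obtains i y where "[(q ^ i + u) * y + t = 0] (mod 2 ^ a)"
proof (cases "a = 0")
  case True
  then show ?thesis
    using that[of 0 0] by (simp add: cong_def)
next
  case False
  have "2 ^ b * 2 ^ (a - b) dvd 2 ^ b * (w * t)"
    using t q(1) ab False by (simp add: mult.assoc flip: power_add)
  then have "2 ^ (a - b) dvd w * t"
    by simp
  then have t_dvd: "2 ^ (a - b) dvd t"
    using q(2) by (simp add: coprime_dvd_mult_right_iff)
  obtain i c v where civ: "q ^ i + u = 2 ^ c * v" "odd v" "c \<le> b"
    using two_power_factor_le[OF q] by metis
  have "(2::int) ^ c dvd 2 ^ (a - b)"
    using civ(3) ab False by (intro le_imp_power_dvd) simp
  then obtain t0 where t0: "t = 2 ^ c * t0"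
    using t_dvd by (meson dvd_trans dvdE)
  have "coprime v (2 ^ a)"
    using civ(2) by simp
  then obtain v' where v': "[v * v' = 1] (mod 2 ^ a)"
    using cong_solve_coprime_int by blast
  have "(q ^ i + u) * (- v' * t0) + t = 2 ^ c * v * (- v' * t0) + 2 ^ c * t0"
    by (simp only: civ(1) t0)
  also have "\<dots> = - (2 ^ c * t0 * (v * v' - 1))"
    by (simp add: algebra_simps)
  finally have "(q ^ i + u) * (- v' * t0) + t = - (2 ^ c * t0 * (v * v' - 1))" .
  moreover have "2 ^ a dvd v * v' - 1"
    using v' by (simp add: cong_iff_dvd_diff)
  ultimately show ?thesis
    using that[of i "- v' * t0"] by (simp add: cong_0_iff)
qed

lemma affine_mod_in_residue_class:
  fixes a c k y :: int and n P :: nat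
  assumes "int P dvd int n" "n > 0" "[k = y] (mod int P)"
  shows "(a * k + c) mod int n \<in> {x \<in> {0..<int n}. [x = a * y + c] (mod int P)}"
proof -
  have "[(a * k + c) mod int n = a * k + c] (mod int P)"
    using assms(1) by (simp add: cong_def mod_mod_cancel)
  also have "[a * k + c = a * y + c] (mod int P)"
    using assms(3) by (intro cong_add cong_scalar_left cong_refl)
  finally show ?thesis
    using assms(2) by simp
qed

text \<open>Both \<open>k \<mapsto> -u k - t\<close> and \<open>k \<mapsto> q\<^sup>i k\<close> map the residue class of \<open>y\<close> modulo \<open>P\<close>
  injectively into that of \<open>q\<^sup>i y\<close>; the first swaps \<open>Z\<close> with its complement, the second
  preserves it, so each class meets \<open>Z\<close> in exactly half of its \<open>m\<close> elements.\<close>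
lemma swap_set_residue_class_even:
  fixes q n u P m :: nat and t y :: int
  assumes n: "n = P * m" "P > 0" and cop: "coprime q n" "coprime u n"
    and Z: "cyclotomic_closed q n Z" and swap: "\<And>j. int u * j - t \<in> Z \<longleftrightarrow> - j \<notin> Z"
    and y: "[(int q ^ i + int u) * y + t = 0] (mod int P)"
  shows "even m"
proof -
  define W where "W c = {k \<in> {0..<int n}. [k = c] (mod int P)}" for c
  define f where "f k = (- int u * k + - t) mod int n" for k
  define g where "g k = (int q ^ i * k + 0) mod int n" for k
  have P: "int P dvd int n"
    using n by simp
  have card_W: "card (W c) = m" for c
    unfolding W_def n(1) using n(2) by (rule card_residue_class)
  have maps: "(a * k + c) mod int n \<in> W (a * y + c)" if "k \<in> W y" for a c k
    using affine_mod_in_residue_class[OF P, of k y] that by (simp add: W_def)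
  have "[int q ^ i * y - ((int q ^ i + int u) * y + t) = int q ^ i * y - 0] (mod int P)"
    by (intro cong_diff cong_refl y)
  then have "[- int u * y + - t = int q ^ i * y] (mod int P)"
    by (simp add: algebra_simps)
  then have W_eq: "W (- int u * y + - t) = W (int q ^ i * y)"
    unfolding W_def using cong_trans cong_sym by blast
  have "even (card (W y))"
  proof (rule even_card_if_swapping_injection)
    show "finite (W (int q ^ i * y))"
      unfolding W_def by (rule finite_subset[of _ "{0..<int n}"]) auto
    show "card (W (int q ^ i * y)) = card (W y)"
      by (simp only: card_W)
    have "inj_on f {0..<int n}" "inj_on g {0..<int n}"
      unfolding f_def g_def using cop by (intro inj_on_affine_mod; simp)+
    then show "inj_on f (W y)" "inj_on g (W y)"
      by (auto simp: W_def elim!: inj_on_subset)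
    show "f ` W y \<subseteq> W (int q ^ i * y)" "g ` W y \<subseteq> W (int q ^ i * y)"
      using maps[of _ "- int u" "- t"] maps[of _ "int q ^ i" 0] W_eq by (auto simp: f_def g_def)
    show "f k \<in> Z \<longleftrightarrow> k \<notin> Z" for k
      using swap[of "- k"] cyclotomic_closed_cong[OF Z, of "f k" "int u * - k - t"]
      by (simp add: f_def cong_def)
    show "g k \<in> Z \<longleftrightarrow> k \<in> Z" for k
      using cyclotomic_closed_coset[OF Z, of "g k" i k] by (simp add: g_def cong_def)
  qed
  then show ?thesis
    by (simp add: card_W)
qed

lemma cong_mult_eq_self_iff_dvd:
  fixes q t n :: nat
  shows "[q * t = t] (mod n) \<longleftrightarrow> int n dvd (int q - 1) * int t"
  by (simp add: cong_iff_dvd_diff left_diff_distrib flip: cong_int_iff)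

lemma two_adic_condition_if_swap:
  fixes q n u t :: nat and Z :: "int set"
  assumes n: "n > 0" and q: "q \<ge> 2" "coprime q n" and u: "coprime u n" and t: "[q * t = t] (mod n)"
    and Z: "cyclotomic_closed q n Z" and swap: "\<And>j. int u * j - int t \<in> Z \<longleftrightarrow> - j \<notin> Z"
  shows "0 < multiplicity 2 n \<and> multiplicity 2 n < 2 * multiplicity 2 (q - 1)"
proof (rule ccontr)
  define a b where "a = multiplicity 2 n" and "b = multiplicity (2::nat) (q - 1)"
  obtain m where m: "n = 2 ^ a * m" "odd m"
    using multiplicity_decompose'[of n 2] n unfolding a_def by auto
  obtain w where w: "q - 1 = 2 ^ b * w" "odd w"
    using multiplicity_decompose'[of "q - 1" 2] q(1) unfolding b_def by auto
  assume "\<not> (0 < multiplicity 2 n \<and> multiplicity 2 n < 2 * multiplicity 2 (q - 1))"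
  then have ab: "a = 0 \<or> 2 * b \<le> a"
    unfolding a_def b_def by linarith
  have "int n dvd (int q - 1) * int t"
    using t by (simp add: cong_mult_eq_self_iff_dvd)
  moreover have "(2::int) ^ a dvd int n"
    using m(1) by simp
  ultimately have dvd: "2 ^ a dvd (int q - 1) * int t"
    by (meson dvd_trans)
  have qw: "int q - 1 = 2 ^ b * int w"
    using arg_cong[OF w(1), of int] q(1) by (simp add: of_nat_diff)
  obtain i y where "[(int q ^ i + int u) * y + int t = 0] (mod 2 ^ a)"
    using two_adic_linear_congruence[OF qw _ ab dvd] w(2) by auto
  then show False
    using swap_set_residue_class_even[OF m(1) _ q(2) u Z swap, of i y] m(2) by simp
qed

lemma mod_add_odd_multiple_swap:
  fixes j h m :: int
  assumes "h > 0" "odd m"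
  shows "(j + h * m) mod (2 * h) < h \<longleftrightarrow> \<not> j mod (2 * h) < h"
proof -
  let ?x = "j mod (2 * h)"
  have x: "0 \<le> ?x" "?x < 2 * h"
    using assms(1) by simp_all
  obtain m' where "m = 2 * m' + 1"
    using assms(2) oddE by blast
  then have "j + h * m = (j + h) + 2 * h * m'"
    by (simp add: algebra_simps)
  then have "(j + h * m) mod (2 * h) = (j + h) mod (2 * h)"
    by (simp only: mod_mult_self2)
  also have "\<dots> = (?x + h) mod (2 * h)"
    by (simp add: mod_add_left_eq)
  also have "\<dots> = (if ?x < h then ?x + h else ?x - h)"
  proof (cases "?x < h")
    case False
    have "?x + h = (?x - h) + 2 * h"
      by simp
    then have "(?x + h) mod (2 * h) = (?x - h + 2 * h) mod (2 * h)"
      by (rule arg_cong)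
    also have "\<dots> = ?x - h"
      using False x by (simp only: mod_add_self2) (simp add: mod_pos_pos_trivial)
    finally show ?thesis
      using False by simp
  qed (use x in \<open>simp add: mod_pos_pos_trivial\<close>)
  finally show ?thesis
    using x by simp
qed

lemma cyclotomic_closed_lower_half:
  fixes R h :: int
  assumes "R dvd int n" "R dvd int q - 1"
  shows "cyclotomic_closed q n {k. k mod R < h}"
  unfolding cyclotomic_closed_def
proof (intro conjI allI impI)
  show "j \<in> {k. k mod R < h} \<longleftrightarrow> j' \<in> {k. k mod R < h}" if "[j = j'] (mod int n)" for j j'
    using cong_dvd_modulus[OF that assms(1)] by (simp add: cong_def)
  show "int q * j \<in> {k. k mod R < h} \<longleftrightarrow> j \<in> {k. k mod R < h}" for j
  proof -
    have "[int q * j = j] (mod R)"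
      using dvd_mult2[OF assms(2), of j] by (simp add: cong_iff_dvd_diff algebra_simps)
    then show ?thesis
      by (simp add: cong_def)
  qed
qed

text \<open>With \<open>r = \<nu>\<^sub>2(n) - \<nu>\<^sub>2(q - 1)\<close>, take for \<open>Z\<close> the lower halves of the residue classes
  modulo \<open>2 * 2\<^sup>r\<close> and \<open>t = 2\<^sup>r m\<close>: translation by \<open>t\<close> swaps the two halves, and
  multiplication by \<open>q\<close>, which is \<open>1\<close> modulo \<open>2 * 2\<^sup>r\<close>, fixes each class.\<close>
lemma swap_set_if_two_adic_condition:
  fixes q n :: nat
  assumes q: "q \<ge> 2" and a: "0 < multiplicity 2 n" "multiplicity 2 n < 2 * multiplicity 2 (q - 1)"
  obtains Z t where "cyclotomic_closed q n Z" "t < n" "[q * t = t] (mod n)"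
    "\<And>j. j + int t \<in> Z \<longleftrightarrow> j \<notin> Z"
proof -
  define a b where "a = multiplicity 2 n" and "b = multiplicity (2::nat) (q - 1)"
  have "n \<noteq> 0"
    by (rule notI) (use a(1) in simp)
  obtain m where m: "n = 2 ^ a * m" "odd m"
    using multiplicity_decompose'[of n 2] \<open>n \<noteq> 0\<close> unfolding a_def by auto
  obtain w where w: "q - 1 = 2 ^ b * w" "odd w"
    using multiplicity_decompose'[of "q - 1" 2] q unfolding b_def by auto
  define r where "r = a - b"
  have r: "Suc r \<le> a" "Suc r \<le> b" "a \<le> r + b"
    using a unfolding a_def b_def r_def by linarith+
  define R :: int where "R = 2 * 2 ^ r"
  have "R dvd 2 ^ a" "R dvd 2 ^ b"
    using r(1,2) le_imp_power_dvd[of "Suc r" a "2::int"] le_imp_power_dvd[of "Suc r" b "2::int"]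
    by (simp_all add: R_def)
  moreover have qw: "int q - 1 = 2 ^ b * int w"
    using arg_cong[OF w(1), of int] q by (simp add: of_nat_diff)
  ultimately have "R dvd int n" "R dvd int q - 1"
    using m(1)
    by (simp_all add: dvd_mult2)
  define t where "t = 2 ^ r * m"
  define Z where "Z = {k. k mod R < 2 ^ r}"
  show thesis
  proof (rule that)
    show "t < n"
      using r(1) m odd_pos[of m] by (simp add: t_def)
    have "(int q - 1) * int t = 2 ^ (r + b) * (int w * int m)"
      by (simp add: qw t_def power_add algebra_simps)
    also have "(2::int) ^ (r + b) = 2 ^ a * 2 ^ (r + b - a)"
      using r(3) by (simp flip: power_add)
    finally have "(int q - 1) * int t = int n * (2 ^ (r + b - a) * int w)"
      using m(1) by (simp add: algebra_simps)
    then show "[q * t = t] (mod n)"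
      by (simp add: cong_mult_eq_self_iff_dvd)
    show "cyclotomic_closed q n Z"
      unfolding Z_def using \<open>R dvd int n\<close> \<open>R dvd int q - 1\<close> by (rule cyclotomic_closed_lower_half)
    show "j + int t \<in> Z \<longleftrightarrow> j \<notin> Z" for j
      using mod_add_odd_multiple_swap[of "2 ^ r" "int m" j] m(2) by (simp add: Z_def R_def t_def)
  qed
qed

section \<open>The discrete Fourier transform\<close>

lemma dvd_diff_of_nat_iff_eq:
  assumes "i < n" "i' < n"
  shows "int n dvd int i - int i' \<longleftrightarrow> i = i'"
proof
  assume "int n dvd int i - int i'"
  then have "[i = i'] (mod n)"
    by (simp add: cong_iff_dvd_diff flip: cong_int_iff)
  then show "i = i'"
    using assms by (simp add: cong_less_modulus_unique_nat)
qed simp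

lemma poly_eq_sum_lessThan:
  fixes p :: "'a::comm_semiring_1 poly"
  assumes "degree p < N"
  shows "poly p x = (\<Sum>i<N. coeff p i * x ^ i)"
proof -
  have "poly p x = (\<Sum>i\<le>degree p. coeff p i * x ^ i)"
    by (rule poly_altdef)
  also have "\<dots> = (\<Sum>i<N. coeff p i * x ^ i)"
    using assms by (intro sum.mono_neutral_left) (auto simp: coeff_eq_0)
  finally show ?thesis .
qed

locale code_dft =
  fixes emb :: "'a::{finite,field} \<Rightarrow> 'b::field" and \<theta> :: 'b and n :: nat
  assumes n_pos: "n > 0"
    and coprime_card: "coprime CARD('a) n"
    and embedding: "field_embedding emb"
    and primitive: "prim_root n \<theta>"
begin

lemma emb_add [simp]: "emb (x + y) = emb x + emb y"
  and emb_mult [simp]: "emb (x * y) = emb x * emb y"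
  and emb_0 [simp]: "emb 0 = 0"
  and emb_1 [simp]: "emb 1 = 1"
  and emb_eq_iff [simp]: "emb x = emb y \<longleftrightarrow> x = y"
  using embedding by (auto simp: field_embedding_def dest: injD)

lemma emb_eq_0_iff [simp]: "emb x = 0 \<longleftrightarrow> x = 0"
  using emb_eq_iff[of x 0] by simp

lemma emb_sum: "emb (sum f A) = (\<Sum>i\<in>A. emb (f i))"
  by (induction A rule: infinite_finite_induct) auto

lemma emb_power [simp]: "emb (x ^ k) = emb x ^ k"
  by (induction k) auto

lemma emb_of_nat [simp]: "emb (of_nat k) = of_nat k"
  by (induction k) auto

lemma CHAR_eq: "CHAR('b) = CHAR('a)"
proof (rule CHAR_eqI)
  fix k assume "(of_nat k :: 'b) = 0"
  then have "emb (of_nat k) = emb 0"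
    by simp
  then show "CHAR('a) dvd k"
    by (simp only: emb_eq_iff of_nat_eq_0_iff_char_dvd)
qed (simp flip: emb_of_nat)

lemma of_nat_n_nonzero: "(of_nat n :: 'b) \<noteq> 0"
proof
  assume "(of_nat n :: 'b) = 0"
  then have "CHAR('a) dvd n"
    by (simp add: of_nat_eq_0_iff_char_dvd CHAR_eq)
  moreover obtain k where k: "CARD('a) = CHAR('a) ^ k"
    using card_finite_field_power_CHAR by blast
  moreover have "k \<noteq> 0"
    using k card_finite_field_ge_2[where 'a = 'a] by (intro notI) simp
  ultimately have "CHAR('a) dvd CARD('a)"
    by simp
  then have "is_unit (CHAR('a))"
    using coprime_common_divisor[OF coprime_card] \<open>CHAR('a) dvd n\<close> by blast
  then show False
    using prime_CHAR_semidom[where 'a = 'a] finite_imp_CHAR_pos[where 'a = 'a] by simp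
qed

lemma fixed_by_frobenius_in_range:
  assumes "y ^ CARD('a) = y"
  shows "y \<in> range emb"
proof -
  define P :: "'b poly" where "P = monom 1 CARD('a) - [:0, 1:]"
  have "degree P = CARD('a)"
    unfolding P_def diff_conv_add_uminus using card_finite_field_ge_2[where 'a = 'a]
    by (subst degree_add_eq_left) (auto simp: degree_monom_eq)
  then have "P \<noteq> 0"
    using card_finite_field_ge_2[where 'a = 'a] by auto
  have roots: "poly P x = 0 \<longleftrightarrow> x ^ CARD('a) = x" for x
    by (simp add: P_def poly_monom)
  have sub: "range emb \<subseteq> {x. poly P x = 0}"
    by (auto simp: roots finite_field_power_card simp flip: emb_power)
  have "card {x. poly P x = 0} \<le> CARD('a)"
    using card_poly_roots_bound[OF \<open>P \<noteq> 0\<close>] \<open>degree P = CARD('a)\<close> by simp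
  moreover have "card (range emb) = CARD('a)"
    using embedding by (simp add: card_image field_embedding_def)
  ultimately have "range emb = {x. poly P x = 0}"
    using card_subset_eq[OF poly_roots_finite[OF \<open>P \<noteq> 0\<close>] sub] card_mono[OF poly_roots_finite[OF \<open>P \<noteq> 0\<close>] sub]
    by simp
  then show ?thesis
    using assms roots by auto
qed

lemma sum_power_card: "(\<Sum>i\<in>A. f i :: 'b) ^ CARD('a) = (\<Sum>i\<in>A. f i ^ CARD('a))"
proof -
  obtain k where "CARD('a) = CHAR('b) ^ k"
    using card_finite_field_power_CHAR[where 'a = 'a] CHAR_eq by auto
  moreover have "prime CHAR('b)"
    using prime_CHAR_semidom[where 'a = 'a] finite_imp_CHAR_pos[where 'a = 'a] CHAR_eq by simp
  ultimately show ?thesis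
    by (intro freshmans_dream_sum')
qed

lemma map_poly_emb_add: "map_poly emb (p + r) = map_poly emb p + map_poly emb r"
  by (rule poly_eqI) (simp add: coeff_map_poly)

lemma map_poly_emb_mult: "map_poly emb (p * r) = map_poly emb p * map_poly emb r"
  by (induction p) (simp_all add: map_poly_pCons map_poly_smult map_poly_emb_add)

lemma map_poly_emb_pcompose:
  "map_poly emb (pcompose p r) = pcompose (map_poly emb p) (map_poly emb r)"
  by (induction p)
     (simp_all add: pcompose_pCons map_poly_pCons map_poly_emb_add map_poly_emb_mult)

lemma poly_map_emb_power_card:
  "poly (map_poly emb p) x ^ CARD('a) = poly (map_poly emb p) (x ^ CARD('a))"
proof -
  have "coeff (map_poly emb p) i ^ CARD('a) = coeff (map_poly emb p) i" for i
    by (simp add: coeff_map_poly finite_field_power_card flip: emb_power)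
  then show ?thesis
    by (simp add: poly_altdef sum_power_card power_mult_distrib flip: power_mult)
       (simp add: mult.commute)
qed

lemma theta_power_n [simp]: "\<theta> ^ n = 1"
  using primitive by (simp add: prim_root_def)

lemma theta_nonzero [simp]: "\<theta> \<noteq> 0"
proof
  assume "\<theta> = 0"
  then have "\<theta> ^ n = 0"
    using n_pos by simp
  then show False
    by simp
qed

lemma theta_powi_cong: "[j = j'] (mod int n) \<Longrightarrow> \<theta> powi j = \<theta> powi j'"
  by (auto simp: cong_iff_lin power_int_add power_int_mult)

lemma theta_powi_eq_1_iff: "\<theta> powi j = 1 \<longleftrightarrow> int n dvd j"
proof
  assume "\<theta> powi j = 1"
  moreover have "\<theta> powi j = \<theta> ^ nat (j mod int n)"
    using n_pos by (simp add: theta_powi_cong[of j "j mod int n"] power_int_nonneg_exp cong_def)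
  moreover have "nat (j mod int n) < n"
    using n_pos by (simp add: nat_less_iff)
  ultimately have "nat (j mod int n) = 0"
    using primitive unfolding prim_root_def by (metis neq0_conv)
  moreover have "0 \<le> j mod int n"
    using n_pos by simp
  ultimately show "int n dvd j"
    by (simp add: dvd_eq_mod_eq_0)
qed (simp add: theta_powi_cong[of j 0] cong_0_iff)

lemma sum_theta_powi:
  "(\<Sum>l<n. \<theta> powi (int l * d)) = (if int n dvd d then of_nat n else 0)"
proof -
  have "(\<Sum>l<n. \<theta> powi (int l * d)) = (\<Sum>l<n. (\<theta> powi d) ^ l)"
    by (simp add: power_int_power' mult.commute)
  also have "\<dots> = (if int n dvd d then of_nat n else 0)"
  proof (cases "int n dvd d")
    case False
    then have "\<theta> powi d \<noteq> 1"
      by (simp add: theta_powi_eq_1_iff)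
    moreover have "(\<theta> powi d) ^ n = 1"
      by (simp add: power_int_power' theta_powi_eq_1_iff)
    ultimately show ?thesis
      using False by (simp add: sum_gp_strict)
  next
    case True
    then have "\<theta> powi d = 1"
      by (simp add: theta_powi_eq_1_iff)
    then show ?thesis
      using True by simp
  qed
  finally show ?thesis .
qed

lemma theta_powi_add: "\<theta> powi a * \<theta> powi b = \<theta> powi (a + b)"
  by (simp add: power_int_add)

lemma theta_powi_power: "(\<theta> powi j) ^ k = \<theta> powi (int k * j)"
  by (simp add: power_int_power' mult.commute)

text \<open>Integer exponents make \<open>dft p\<close> an \<open>n\<close>-periodic function on \<open>\<int>\<close>, so negating an index
  needs no truncated subtraction.\<close>
definition dft :: "'a poly \<Rightarrow> int \<Rightarrow> 'b" where
  "dft p j = poly (map_poly emb p) (\<theta> powi j)"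

lemma dft_cong: "[j = j'] (mod int n) \<Longrightarrow> dft p j = dft p j'"
  by (simp add: dft_def theta_powi_cong)

lemma dft_add: "dft (p + r) j = dft p j + dft r j"
  by (simp add: dft_def map_poly_emb_add)

lemma dft_mult: "dft (p * r) j = dft p j * dft r j"
  by (simp add: dft_def map_poly_emb_mult)

lemma dft_monom: "dft (monom c k) j = emb c * \<theta> powi (int k * j)"
  by (simp add: dft_def map_poly_monom poly_monom theta_powi_power)

lemma dft_xn1: "dft (xn1 n) j = 0"
proof -
  have "dft (xn1 n) j + dft 1 j = dft (monom 1 n) j"
    by (simp add: xn1_def flip: dft_add)
  moreover have "dft (monom 1 n) j = 1"
    by (simp add: dft_monom theta_powi_eq_1_iff)
  moreover have "dft 1 j = 1"
    by (simp add: dft_def)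
  ultimately show ?thesis
    by simp
qed

lemma dft_mod_xn1: "dft (p mod xn1 n) j = dft p j"
proof -
  have "dft p j = dft (p div xn1 n * xn1 n + p mod xn1 n) j"
    by simp
  then show ?thesis
    by (simp only: dft_add dft_mult dft_xn1) simp
qed

lemma dft_shift: "dft ((monom 1 l * p) mod xn1 n) j = \<theta> powi (j * int l) * dft p j"
  by (simp add: dft_mod_xn1 dft_mult dft_monom mult.commute)

lemma Rn_iff_degree: "(p :: 'a poly) \<in> Rn n \<longleftrightarrow> degree p < n"
  using n_pos by (auto simp: Rn_def)

lemma mod_xn1_in_Rn: "(p :: 'a poly) mod xn1 n \<in> Rn n"
proof -
  have deg: "degree (xn1 n :: 'a poly) = n"
    unfolding xn1_def diff_conv_add_uminus using n_pos
    by (subst degree_add_eq_left) (auto simp: degree_monom_eq)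
  then have nz: "xn1 n \<noteq> (0 :: 'a poly)"
    using n_pos by auto
  show ?thesis
    using degree_mod_less[OF nz, of p] deg by (auto simp: Rn_def)
qed

lemma dft_eq_sum:
  assumes "p \<in> Rn n"
  shows "dft p j = (\<Sum>i<n. emb (coeff p i) * \<theta> powi (int i * j))"
proof -
  have "degree (map_poly emb p) < n"
    using map_poly_degree_leq[of emb p] assms by (simp add: Rn_iff_degree)
  then show ?thesis
    by (simp add: dft_def poly_eq_sum_lessThan coeff_map_poly theta_powi_power)
qed

lemma sum_dft_inverse:
  fixes v :: "nat \<Rightarrow> 'b"
  assumes "k < n"
  shows "(\<Sum>l<n. \<theta> powi (- (int l * int k)) * (\<Sum>m<n. v m * \<theta> powi (int m * int l)))
    = of_nat n * v k"
proof -
  have "(\<Sum>l<n. \<theta> powi (- (int l * int k)) * (\<Sum>m<n. v m * \<theta> powi (int m * int l)))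
      = (\<Sum>l<n. \<Sum>m<n. v m * \<theta> powi (int l * (int m - int k)))"
    by (simp add: sum_distrib_left theta_powi_add algebra_simps)
  also have "\<dots> = (\<Sum>m<n. v m * (\<Sum>l<n. \<theta> powi (int l * (int m - int k))))"
    by (subst sum.swap) (simp add: sum_distrib_left)
  also have "\<dots> = (\<Sum>m<n. if m = k then of_nat n * v m else 0)"
  proof (rule sum.cong[OF refl])
    fix m assume "m \<in> {..<n}"
    then have "int n dvd int m - int k \<longleftrightarrow> m = k"
      using assms by (simp add: dvd_diff_of_nat_iff_eq)
    then show "v m * (\<Sum>l<n. \<theta> powi (int l * (int m - int k))) = (if m = k then of_nat n * v m else 0)"
      by (simp add: sum_theta_powi)
  qed
  also have "\<dots> = of_nat n * v k"
    using assms by simp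
  finally show ?thesis .
qed

lemma coeff_eq_inverse_dft:
  assumes "p \<in> Rn n" "k < n"
  shows "of_nat n * emb (coeff p k) = (\<Sum>l<n. \<theta> powi (- (int l * int k)) * dft p (int l))"
  using sum_dft_inverse[OF assms(2), of "\<lambda>i. emb (coeff p i)"] by (simp add: dft_eq_sum assms(1))

lemma dft_inject:
  assumes "p \<in> Rn n" "r \<in> Rn n" "\<And>j. dft p j = dft r j"
  shows "p = r"
proof (rule poly_eqI)
  fix k
  show "coeff p k = coeff r k"
  proof (cases "k < n")
    case True
    then have "of_nat n * emb (coeff p k) = of_nat n * emb (coeff r k)"
      by (simp add: coeff_eq_inverse_dft assms)
    then show ?thesis
      using of_nat_n_nonzero by simp
  qed (use assms(1,2) in \<open>simp add: Rn_iff_degree coeff_eq_0\<close>)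
qed

lemma parseval:
  assumes "a \<in> Rn n" "b \<in> Rn n"
  shows "of_nat n * emb (\<Sum>i<n. coeff a i * coeff b i) = (\<Sum>k<n. dft a (int k) * dft b (- int k))"
proof -
  let ?A = "\<lambda>i. emb (coeff a i)" and ?B = "\<lambda>i. emb (coeff b i)"
  have "(\<Sum>k<n. dft a (int k) * dft b (- int k))
      = (\<Sum>k<n. \<Sum>i<n. \<Sum>i'<n. ?A i * ?B i' * \<theta> powi (int k * (int i - int i')))"
    by (simp add: dft_eq_sum assms sum_product theta_powi_add algebra_simps)
  also have "\<dots> = (\<Sum>i<n. \<Sum>k<n. \<Sum>i'<n. ?A i * ?B i' * \<theta> powi (int k * (int i - int i')))"
    by (rule sum.swap)
  also have "\<dots> = (\<Sum>i<n. \<Sum>i'<n. \<Sum>k<n. ?A i * ?B i' * \<theta> powi (int k * (int i - int i')))"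
    by (rule sum.cong[OF refl], rule sum.swap)
  also have "\<dots> = (\<Sum>i<n. \<Sum>i'<n. ?A i * ?B i' * (\<Sum>k<n. \<theta> powi (int k * (int i - int i'))))"
    by (simp add: sum_distrib_left)
  also have "\<dots> = (\<Sum>i<n. \<Sum>i'<n. if i' = i then of_nat n * (?A i * ?B i) else 0)"
  proof (intro sum.cong refl)
    fix i i' assume "i \<in> {..<n}" "i' \<in> {..<n}"
    then have "int n dvd int i - int i' \<longleftrightarrow> i' = i"
      by (auto simp: dvd_diff_of_nat_iff_eq)
    then show "?A i * ?B i' * (\<Sum>k<n. \<theta> powi (int k * (int i - int i')))
        = (if i' = i then of_nat n * (?A i * ?B i) else 0)"
      by (simp add: sum_theta_powi)
  qed
  also have "\<dots> = of_nat n * emb (\<Sum>i<n. coeff a i * coeff b i)"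
    by (simp add: emb_sum sum_distrib_left)
  finally show ?thesis ..
qed

lemma inner_eq_0_if_dft_products_eq_0:
  assumes "a \<in> Rn n" "b \<in> Rn n" "\<And>k. dft a (int k) * dft b (- int k) = 0"
  shows "(\<Sum>i<n. coeff a i * coeff b i) = 0"
proof -
  have "of_nat n * emb (\<Sum>i<n. coeff a i * coeff b i) = (\<Sum>k<n. dft a (int k) * dft b (- int k))"
    by (rule parseval[OF assms(1,2)])
  also have "\<dots> = 0"
    by (intro sum.neutral ballI assms(3))
  finally show ?thesis
    using of_nat_n_nonzero by simp
qed

lemma dft_mult_dft_dual_eq_0:
  assumes C: "cyclic_code n C" and a: "a \<in> C" and b: "b \<in> dual_code n C"
  shows "dft a j * dft b (- j) = 0"
proof -
  define v where "v m = dft a (int m) * dft b (- int m)" for m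
  have inner: "(\<Sum>m<n. v m * \<theta> powi (int m * int l)) = 0" if "l < n" for l
  proof -
    let ?a = "(monom 1 l * a) mod xn1 n"
    have "?a \<in> C"
      using C a by (simp add: cyclic_code_def)
    have "(\<Sum>m<n. v m * \<theta> powi (int m * int l)) = (\<Sum>m<n. dft ?a (int m) * dft b (- int m))"
      unfolding v_def dft_shift by (simp add: ac_simps)
    also have "\<dots> = of_nat n * emb (\<Sum>i<n. coeff ?a i * coeff b i)"
      using b by (intro parseval[symmetric] mod_xn1_in_Rn) (simp add: dual_code_def)
    also have "\<dots> = 0"
      using b \<open>?a \<in> C\<close> by (simp add: dual_code_def)
    finally show ?thesis .
  qed
  have sum_zero: "(\<Sum>l<n. \<theta> powi (- (int l * int k)) * (\<Sum>m<n. v m * \<theta> powi (int m * int l))) = 0"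
    for k
    by (intro sum.neutral) (simp add: inner)
  have "nat (j mod int n) < n"
    using n_pos by (simp add: nat_less_iff)
  from sum_dft_inverse[OF this, of v] have "of_nat n * v (nat (j mod int n)) = 0"
    by (simp only: sum_zero)
  then have "v (nat (j mod int n)) = 0"
    using of_nat_n_nonzero by simp
  moreover have "dft a (int (nat (j mod int n))) = dft a j"
    by (rule dft_cong) (use n_pos in \<open>simp add: cong_def\<close>)
  moreover have "dft b (- int (nat (j mod int n))) = dft b (- j)"
    by (rule dft_cong) (use n_pos in \<open>simp add: cong_def mod_minus_eq\<close>)
  ultimately show ?thesis
    by (simp add: v_def)
qed

end

section \<open>Codes given by their zeros\<close>

context code_dft begin

lemma dft_frobenius: "dft p (int CARD('a) * j) = dft p j ^ CARD('a)"
  by (simp add: dft_def poly_map_emb_power_card power_int_power' mult.commute)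

definition cyclotomic_coset :: "int \<Rightarrow> int set" where
  "cyclotomic_coset x = {k \<in> {0..<int n}. \<exists>l. [k = int CARD('a) ^ l * x] (mod int n)}"

lemma finite_cyclotomic_coset: "finite (cyclotomic_coset x)"
  by (rule finite_subset[of _ "{0..<int n}"]) (auto simp: cyclotomic_coset_def)

lemma cyclotomic_coset_mult_card:
  "(\<lambda>k. (int CARD('a) * k) mod int n) ` cyclotomic_coset x = cyclotomic_coset x"
proof (rule mult_mod_image_eq)
  show "coprime (int CARD('a)) (int n)"
    using coprime_card by simp
  show "cyclotomic_coset x \<subseteq> {0..<int n}"
    by (auto simp: cyclotomic_coset_def)
  fix k assume "k \<in> cyclotomic_coset x"
  then obtain l where "[k = int CARD('a) ^ l * x] (mod int n)"
    by (auto simp: cyclotomic_coset_def)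
  then have "[int CARD('a) * k = int CARD('a) ^ Suc l * x] (mod int n)"
    using cong_scalar_left[of k _ "int n" "int CARD('a)"] by (simp add: mult.assoc)
  then have "[(int CARD('a) * k) mod int n = int CARD('a) ^ Suc l * x] (mod int n)"
    by (simp add: cong_def)
  then show "(int CARD('a) * k) mod int n \<in> cyclotomic_coset x"
    using n_pos unfolding cyclotomic_coset_def by (auto intro!: exI[of _ "Suc l"])
qed

text \<open>The coefficients are the traces \<open>\<Sum>k. \<theta>^(-i k)\<close> over the cyclotomic coset; they are
  fixed by the Frobenius, hence lie in the image of \<open>emb\<close>.\<close>
definition coset_poly :: "int \<Rightarrow> 'a poly" where
  "coset_poly x = (\<Sum>i<n. monom (inv emb (\<Sum>k\<in>cyclotomic_coset x. \<theta> powi (- (int i * k)))) i)"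

lemma coset_trace_in_range:
  "(\<Sum>k\<in>cyclotomic_coset x. \<theta> powi (- (int i * k))) \<in> range emb"
proof (rule fixed_by_frobenius_in_range)
  let ?q = "int CARD('a)" and ?C = "cyclotomic_coset x"
  have "(\<Sum>k\<in>?C. \<theta> powi (- (int i * k))) ^ CARD('a) = (\<Sum>k\<in>?C. (\<theta> powi (- (int i * k))) ^ CARD('a))"
    by (rule sum_power_card)
  also have "\<dots> = (\<Sum>k\<in>?C. \<theta> powi (- (int i * ((?q * k) mod int n))))"
  proof (rule sum.cong[OF refl])
    fix k
    have "[int i * ((?q * k) mod int n) = int i * (?q * k)] (mod int n)"
      by (intro cong_scalar_left) (simp add: cong_def)
    then have "[?q * - (int i * k) = - (int i * ((?q * k) mod int n))] (mod int n)"
      by (simp add: cong_minus_minus_iff ac_simps cong_sym_eq)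
    then show "(\<theta> powi (- (int i * k))) ^ CARD('a) = \<theta> powi (- (int i * ((?q * k) mod int n)))"
      by (simp add: theta_powi_power theta_powi_cong)
  qed
  also have "\<dots> = (\<Sum>k\<in>(\<lambda>k. (?q * k) mod int n) ` ?C. \<theta> powi (- (int i * k)))"
  proof (rule sum.reindex[symmetric, unfolded comp_def])
    show "inj_on (\<lambda>k. (?q * k) mod int n) ?C"
      using coprime_card inj_on_affine_mod[of ?q "int n" 0]
      by (auto simp: cyclotomic_coset_def intro: inj_on_subset)
  qed
  finally show "(\<Sum>k\<in>?C. \<theta> powi (- (int i * k))) ^ CARD('a) = (\<Sum>k\<in>?C. \<theta> powi (- (int i * k)))"
    by (simp only: cyclotomic_coset_mult_card)
qed

lemma emb_coeff_coset_poly: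
  "emb (coeff (coset_poly x) i) = (if i < n then \<Sum>k\<in>cyclotomic_coset x. \<theta> powi (- (int i * k)) else 0)"
  using coset_trace_in_range[where x = x and i = i] by (simp add: coset_poly_def coeff_sum f_inv_into_f)

lemma coset_poly_in_Rn: "coset_poly x \<in> Rn n"
proof -
  have "coeff (coset_poly x) i = 0" if "i \<ge> n" for i
    using emb_coeff_coset_poly[where x = x and i = i] that by (simp flip: emb_0)
  then show ?thesis
    using n_pos by (auto simp: Rn_iff_degree intro: degree_lessI)
qed

lemma dft_coset_poly:
  "dft (coset_poly x) j = (if \<exists>l. [j = int CARD('a) ^ l * x] (mod int n) then of_nat n else 0)"
proof -
  let ?C = "cyclotomic_coset x"
  have "dft (coset_poly x) j = (\<Sum>i<n. (\<Sum>k\<in>?C. \<theta> powi (- (int i * k))) * \<theta> powi (int i * j))"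
    by (simp add: dft_eq_sum coset_poly_in_Rn emb_coeff_coset_poly)
  also have "\<dots> = (\<Sum>i<n. \<Sum>k\<in>?C. \<theta> powi (int i * (j - k)))"
  proof -
    have "\<theta> powi (- (int i * k)) * \<theta> powi (int i * j) = \<theta> powi (int i * (j - k))" for i k
      by (simp add: theta_powi_add algebra_simps)
    then show ?thesis
      by (simp add: sum_distrib_right)
  qed
  also have "\<dots> = (\<Sum>k\<in>?C. \<Sum>i<n. \<theta> powi (int i * (j - k)))"
    by (rule sum.swap)
  also have "\<dots> = (\<Sum>k\<in>?C. if k = j mod int n then of_nat n else 0)"
  proof (rule sum.cong[OF refl])
    fix k assume "k \<in> ?C"
    then have "int n dvd j - k \<longleftrightarrow> k = j mod int n"
      by (auto simp: cyclotomic_coset_def cong_def simp flip: cong_iff_dvd_diff)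
    then show "(\<Sum>i<n. \<theta> powi (int i * (j - k))) = (if k = j mod int n then of_nat n else 0)"
      by (simp add: sum_theta_powi)
  qed
  also have "\<dots> = (if j mod int n \<in> ?C then of_nat n else 0)"
    by (rule sum.delta[OF finite_cyclotomic_coset])
  also have "j mod int n \<in> ?C \<longleftrightarrow> (\<exists>l. [j = int CARD('a) ^ l * x] (mod int n))"
    using n_pos by (simp add: cyclotomic_coset_def cong_def)
  finally show ?thesis .
qed

definition zero_set :: "'a poly set \<Rightarrow> int set" where
  "zero_set C = {j. \<forall>a\<in>C. dft a j = 0}"

definition code_of_zeros :: "int set \<Rightarrow> 'a poly set" where
  "code_of_zeros Z = {p \<in> Rn n. \<forall>j\<in>Z. dft p j = 0}"

lemma cyclotomic_closed_zero_set: "cyclotomic_closed CARD('a) n (zero_set C)"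
proof (rule cyclotomic_closedI[OF n_pos coprime_card])
  show "j \<in> zero_set C \<longleftrightarrow> j' \<in> zero_set C" if "[j = j'] (mod int n)" for j j'
    using dft_cong[OF that] by (simp add: zero_set_def)
  show "int CARD('a) * j \<in> zero_set C" if "j \<in> zero_set C" for j
    using that by (simp add: zero_set_def dft_frobenius)
qed

lemma cyclic_code_of_zeros: "cyclic_code n (code_of_zeros Z)"
  unfolding cyclic_code_def
proof (intro conjI ballI allI)
  show "code_of_zeros Z \<subseteq> Rn n" "0 \<in> code_of_zeros Z"
    by (auto simp: code_of_zeros_def Rn_def dft_def)
  fix p r assume p: "p \<in> code_of_zeros Z"
  then show "(r * p) mod xn1 n \<in> code_of_zeros Z"
    by (simp add: code_of_zeros_def mod_xn1_in_Rn dft_mod_xn1 dft_mult)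
  assume "r \<in> code_of_zeros Z"
  with p have "max (degree p) (degree r) < n"
    by (simp add: code_of_zeros_def Rn_iff_degree)
  then have "degree (p + r) < n"
    using degree_add_le_max[of p r] by linarith
  with p \<open>r \<in> code_of_zeros Z\<close> show "p + r \<in> code_of_zeros Z"
    by (simp add: code_of_zeros_def Rn_iff_degree dft_add)
qed

lemma zero_set_code_of_zeros:
  assumes "cyclotomic_closed CARD('a) n Z"
  shows "zero_set (code_of_zeros Z) = Z"
proof
  show "Z \<subseteq> zero_set (code_of_zeros Z)"
    by (auto simp: zero_set_def code_of_zeros_def)
  show "zero_set (code_of_zeros Z) \<subseteq> Z"
  proof
    fix x assume x: "x \<in> zero_set (code_of_zeros Z)"
    show "x \<in> Z"
    proof (rule ccontr)
      assume "x \<notin> Z"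
      then have "coset_poly x \<in> code_of_zeros Z"
        using cyclotomic_closed_coset[OF assms]
        by (auto simp: code_of_zeros_def coset_poly_in_Rn dft_coset_poly)
      moreover have "dft (coset_poly x) x \<noteq> 0"
        using of_nat_n_nonzero by (auto simp: dft_coset_poly intro: exI[of _ 0])
      ultimately show False
        using x by (auto simp: zero_set_def)
    qed
  qed
qed

lemma coset_poly_in_dual_code:
  assumes C: "C \<subseteq> Rn n" and neg: "- j \<in> zero_set C"
  shows "coset_poly j \<in> dual_code n C"
proof -
  have "(\<Sum>i<n. coeff a i * coeff (coset_poly j) i) = 0" if a: "a \<in> C" for a
  proof (rule inner_eq_0_if_dft_products_eq_0)
    show "a \<in> Rn n" "coset_poly j \<in> Rn n"
      using C a by (auto simp: coset_poly_in_Rn)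
    show "dft a (int k) * dft (coset_poly j) (- int k) = 0" for k
    proof (cases "dft (coset_poly j) (- int k) = 0")
      case False
      then obtain l where "[- int k = int CARD('a) ^ l * j] (mod int n)"
        by (auto simp: dft_coset_poly split: if_splits)
      then have "[int k = int CARD('a) ^ l * - j] (mod int n)"
        by (metis cong_minus_minus_iff mult_minus_right minus_minus)
      then have "int k \<in> zero_set C"
        using cyclotomic_closed_coset[OF cyclotomic_closed_zero_set] neg by blast
      then show ?thesis
        using a by (simp add: zero_set_def)
    qed simp
  qed
  then show ?thesis
    by (simp add: dual_code_def coset_poly_in_Rn)
qed

lemma zero_set_dual_code:
  assumes C: "cyclic_code n C"
  shows "zero_set (dual_code n C) = {j. - j \<notin> zero_set C}"
proof (intro equalityI subsetI; simp)
  fix j assume j: "j \<in> zero_set (dual_code n C)"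
  show "- j \<notin> zero_set C"
  proof
    assume "- j \<in> zero_set C"
    then have "coset_poly j \<in> dual_code n C"
      using C by (intro coset_poly_in_dual_code) (simp_all add: cyclic_code_def)
    moreover have "dft (coset_poly j) j \<noteq> 0"
      using of_nat_n_nonzero by (auto simp: dft_coset_poly intro: exI[of _ 0])
    ultimately show False
      using j by (auto simp: zero_set_def)
  qed
next
  fix j assume "- j \<notin> zero_set C"
  then obtain a where "a \<in> C" "dft a (- j) \<noteq> 0"
    by (auto simp: zero_set_def)
  then show "j \<in> zero_set (dual_code n C)"
    using dft_mult_dft_dual_eq_0[OF C, of a _ "- j"] by (auto simp: zero_set_def)
qed

lemma dual_code_of_zeros:
  assumes Z: "cyclotomic_closed CARD('a) n Z"
  shows "dual_code n (code_of_zeros Z) = code_of_zeros {j. - j \<notin> Z}"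
proof
  show "dual_code n (code_of_zeros Z) \<subseteq> code_of_zeros {j. - j \<notin> Z}"
  proof
    fix b assume b: "b \<in> dual_code n (code_of_zeros Z)"
    have "zero_set (dual_code n (code_of_zeros Z)) = {j. - j \<notin> Z}"
      by (simp add: zero_set_dual_code[OF cyclic_code_of_zeros] zero_set_code_of_zeros[OF Z])
    then have "dft b j = 0" if "- j \<notin> Z" for j
      using b that by (auto simp: zero_set_def)
    then show "b \<in> code_of_zeros {j. - j \<notin> Z}"
      using b by (simp add: code_of_zeros_def dual_code_def)
  qed
  show "code_of_zeros {j. - j \<notin> Z} \<subseteq> dual_code n (code_of_zeros Z)"
  proof
    fix b assume b: "b \<in> code_of_zeros {j. - j \<notin> Z}"
    have "(\<Sum>i<n. coeff a i * coeff b i) = 0" if a: "a \<in> code_of_zeros Z" for a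
    proof (rule inner_eq_0_if_dft_products_eq_0)
      show "a \<in> Rn n" "b \<in> Rn n"
        using a b by (simp_all add: code_of_zeros_def)
      show "dft a (int k) * dft b (- int k) = 0" for k
        using a b by (cases "int k \<in> Z") (auto simp: code_of_zeros_def)
    qed
    then show "b \<in> dual_code n (code_of_zeros Z)"
      using b by (simp add: dual_code_def code_of_zeros_def)
  qed
qed

lemma dft_phi:
  assumes "[CARD('a) * t = t] (mod n)"
  shows "dft (phi emb \<theta> n s' t a) j = dft a (int s' * j - int t)"
proof -
  have "[- int t * int CARD('a) = - int t] (mod int n)"
    using assms by (simp add: cong_minus_minus_iff mult.commute flip: cong_int_iff)
  then have "(\<theta> powi (- int t)) ^ CARD('a) = \<theta> powi (- int t)"
    by (simp add: power_int_power' theta_powi_cong)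
  then have "\<theta> powi (- int t) \<in> range emb"
    by (rule fixed_by_frobenius_in_range)
  then obtain c where c: "emb c = \<theta> powi (- int t)"
    by (metis rangeE)
  then have c': "emb c = inverse (\<theta> ^ t)"
    by (simp add: power_int_minus)
  then have "(THE c. emb c = inverse (\<theta> ^ t)) = c"
    by (intro the_equality) (auto simp flip: c')
  then have "dft (phi emb \<theta> n s' t a) j = dft (pcompose a (monom c s')) j"
    by (simp add: phi_def dft_mod_xn1)
  also have "\<dots> = dft a (int s' * j - int t)"
    by (simp add: dft_def map_poly_emb_pcompose poly_pcompose map_poly_monom poly_monom c
        power_int_power' theta_powi_add algebra_simps)
  finally show ?thesis .
qed

lemma zero_set_phi_image:
  "[CARD('a) * t = t] (mod n) \<Longrightarrow>
     zero_set (phi emb \<theta> n s' t ` C) = {j. int s' * j - int t \<in> zero_set C}"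
  by (auto simp: zero_set_def dft_phi)

lemma phi_image_code_of_zeros:
  assumes t: "[CARD('a) * t = t] (mod n)" and s: "[int s = - 1] (mod int n)"
  shows "phi emb \<theta> n s t ` code_of_zeros Z = code_of_zeros {j. - j - int t \<in> Z}"
proof -
  let ?phi = "phi emb \<theta> n s t"
  have dft_phi': "dft (?phi p) j = dft p (- j - int t)" for p j
  proof -
    have "[int s * j - int t = - 1 * j - int t] (mod int n)"
      using s by (intro cong_diff cong_mult cong_refl)
    then show ?thesis
      by (simp add: dft_phi[OF t] dft_cong)
  qed
  have phi_Rn: "?phi p \<in> Rn n" for p
    by (simp add: phi_def mod_xn1_in_Rn)
  show ?thesis
  proof (intro equalityI subsetI)
    fix x assume "x \<in> ?phi ` code_of_zeros Z"
    then show "x \<in> code_of_zeros {j. - j - int t \<in> Z}"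
      by (auto simp: code_of_zeros_def phi_Rn dft_phi')
  next
    fix x assume x: "x \<in> code_of_zeros {j. - j - int t \<in> Z}"
    have "?phi (?phi x) = x"
      using x by (intro dft_inject phi_Rn) (auto simp: code_of_zeros_def dft_phi')
    moreover have "?phi x \<in> code_of_zeros Z"
      using x by (auto simp: code_of_zeros_def phi_Rn dft_phi')
    ultimately show "x \<in> ?phi ` code_of_zeros Z"
      by (metis image_eqI)
  qed
qed

lemma iso_self_dual_imp_swap:
  assumes C: "cyclic_code n C" and "iso_self_dual emb \<theta> n C"
  obtains u t where "coprime u n" "[CARD('a) * t = t] (mod n)"
    "\<And>j. int u * j - int t \<in> zero_set C \<longleftrightarrow> - j \<notin> zero_set C"
proof -
  obtain s u t where st: "[s * u = 1] (mod n)" "[CARD('a) * t = t] (mod n)"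
    "phi emb \<theta> n u t ` C = dual_code n C"
    using assms(2) by (auto simp: iso_self_dual_def)
  have "coprime (s * u) n"
    using cong_imp_coprime[OF cong_sym[OF st(1)]] by simp
  moreover have "int u * j - int t \<in> zero_set C \<longleftrightarrow> - j \<notin> zero_set C" for j
    using arg_cong[OF st(3), of zero_set] by (auto simp: zero_set_phi_image[OF st(2)]
        zero_set_dual_code[OF C] set_eq_iff)
  ultimately show ?thesis
    using that[of u t] st(2) by simp
qed

lemma iso_self_dual_code_of_zeros:
  assumes Z: "cyclotomic_closed CARD('a) n Z" and t: "t < n" "[CARD('a) * t = t] (mod n)"
    and swap: "\<And>j. j + int t \<in> Z \<longleftrightarrow> j \<notin> Z"
  shows "iso_self_dual emb \<theta> n (code_of_zeros Z)"
proof -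
  have "n \<noteq> 1"
  proof
    assume "n = 1"
    then have "0 + int t \<in> Z \<longleftrightarrow> 0 \<in> Z"
      by (intro cyclotomic_closed_cong[OF Z]) (simp add: cong_def)
    then show False
      using swap[of 0] by simp
  qed
  then have n2: "n \<ge> 2"
    using n_pos by simp
  have "{j. - j - int t \<in> Z} = {j. - j \<notin> Z}"
    using swap by (metis diff_add_cancel)
  moreover have minus_one: "[int (n - 1) = - 1] (mod int n)"
    using n_pos by (simp add: cong_iff_dvd_diff of_nat_diff)
  ultimately have "phi emb \<theta> n (n - 1) t ` code_of_zeros Z = dual_code n (code_of_zeros Z)"
    by (simp add: phi_image_code_of_zeros[OF t(2)] dual_code_of_zeros[OF Z])
  moreover have "[(n - 1) * (n - 1) = 1] (mod n)"
    using cong_mult[OF minus_one minus_one] by (simp flip: cong_int_iff)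
  ultimately show ?thesis
    unfolding iso_self_dual_def using n2 t coprime_diff_one_left_nat[of n]
    by (intro exI[of _ "n - 1"] exI[of _ t]) auto
qed

end

theorem theorem4p1:
  fixes emb :: "'a::{finite,field} \<Rightarrow> 'b::field" and \<theta> :: 'b and n :: nat
  assumes "n > 0"
    and "coprime (card (UNIV :: 'a set)) n"
    and "field_embedding emb"
    and "prim_root n \<theta>"
  shows "(\<exists>C. cyclic_code n C \<and> iso_self_dual emb \<theta> n C) \<longleftrightarrow>
         (0 < multiplicity (2::nat) n \<and>
          multiplicity (2::nat) n < 2 * multiplicity (2::nat) (card (UNIV :: 'a set) - 1))"
proof -
  interpret code_dft emb \<theta> n
    using assms by unfold_locales
  show ?thesis
  proof
    assume "\<exists>C. cyclic_code n C \<and> iso_self_dual emb \<theta> n C"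
    then obtain C where C: "cyclic_code n C" "iso_self_dual emb \<theta> n C"
      by blast
    obtain u t where u: "coprime u n" and t: "[CARD('a) * t = t] (mod n)"
      and swap: "\<And>j. int u * j - int t \<in> zero_set C \<longleftrightarrow> - j \<notin> zero_set C"
      using iso_self_dual_imp_swap[OF C] by blast
    show "0 < multiplicity 2 n \<and> multiplicity 2 n < 2 * multiplicity 2 (CARD('a) - 1)"
      by (rule two_adic_condition_if_swap[OF assms(1) card_finite_field_ge_2 assms(2) u t
            cyclotomic_closed_zero_set swap])
  next
    assume "0 < multiplicity 2 n \<and> multiplicity 2 n < 2 * multiplicity 2 (CARD('a) - 1)"
    then obtain Z t where "cyclotomic_closed CARD('a) n Z" "t < n" "[CARD('a) * t = t] (mod n)"
      "\<And>j. j + int t \<in> Z \<longleftrightarrow> j \<notin> Z"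
      using swap_set_if_two_adic_condition[OF card_finite_field_ge_2] by blast
    then show "\<exists>C. cyclic_code n C \<and> iso_self_dual emb \<theta> n C"
      using cyclic_code_of_zeros iso_self_dual_code_of_zeros by blast
  qed
qed

end
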